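(* $\displaystyle\lim_{m\to\infty} csd(\mathbb{Z}_2\times Q_{2^{m+1}})=0.$
   Context: For a finite group $G$, $L_1(G)$ is the set of cyclic subgroups of $G$ and $csd(G)=\frac{1}{|L_1(G)|^2}|\{(H,K)\in L_1(G)^2: HK=KH\}|$. $Q_{2^{m+1}}=\langle x,y\mid x^{2^m}=e,\ y^2=x^{2^{m-1}},\ y^{-1}xy=x^{-1}\rangle$ is the generalized quaternion group of order $2^{m+1}$ ($m\geq 2$). *)

theory Defs
  imports "HOL-Algebra.Algebra" "HOL-Analysis.Analysis"
begin

definition cyclic_subgroups :: "('a, 'b) monoid_scheme \<Rightarrow> 'a set set" where
  "cyclic_subgroups G = {generate G {g} | g. g \<in> carrier G}"

definition csd :: "('a, 'b) monoid_scheme \<Rightarrow> real" where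
  "csd G = real (card {(H, K). H \<in> cyclic_subgroups G \<and> K \<in> cyclic_subgroups G
                          \<and> H <#>\<^bsub>G\<^esub> K = K <#>\<^bsub>G\<^esub> H})
           / (real (card (cyclic_subgroups G)))^2"

text \<open>Concrete model of the generalized quaternion group Q_{2^(m+1)}:
  the pair (i, a) with 0 \<le> i < 2^m, a \<in> {0,1} stands for x^i y^a.
  Relations: x^(2^m) = e, y^2 = x^(2^(m-1)), y^-1 x y = x^-1 (so y x^j = x^-j y).\<close>
definition quat_mult :: "nat \<Rightarrow> nat \<times> nat \<Rightarrow> nat \<times> nat \<Rightarrow> nat \<times> nat" where
  "quat_mult m p q = (case p of (i, a) \<Rightarrow> case q of (j, b) \<Rightarrow>
     (if a = 0 then ((i + j) mod 2^m, b)
      else if b = 0 then ((i + (2^m - j)) mod 2^m, 1)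
      else ((i + (2^m - j) + 2^(m-1)) mod 2^m, 0)))"

definition quaternion_group :: "nat \<Rightarrow> (nat \<times> nat) monoid" where
  "quaternion_group m = \<lparr>carrier = {0..<2^m} \<times> {0..<2}, monoid.mult = quat_mult m, one = (0, 0)\<rparr>"

end

theory Submission
  imports Defs "HOL-Number_Theory.Cong" "HOL-Real_Asymp.Real_Asymp"
begin

(*
  Write x^k and x^k y for the elements of Q_{2^(m+1)}. A cyclic subgroup of Z_2 \<times> Q_{2^(m+1)} is
  generated either by some (c, x^k), and then equally by (c, x^(2^v)) with v \<le> m, since odd multiples
  of the exponent generate the same subgroup; or by some (c, x^a y), and then it is
  {1, (c, x^a y), (0, x^(2^(m-1))), (c, x^(a+2^(m-1)) y)}. So there are at most 2(m+1) subgroups of the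
  first kind, and at least 2^(m-1) cyclic subgroups altogether. If two subgroups of the second kind
  permute, then (d, x^b y)(c, x^a y) factors through them, which forces 2^m to divide 4(a - b); hence
  they account for only O(2^m) permuting pairs. Altogether csd \<le> (8m + 72) / 2^m.
*)

lemma mod_add_modulus_minus_mod:
  "((x::int) mod n + (n - y mod n) + z) mod n = (x - y + z) mod n"
  by (smt (verit, best) minus_mod_self2 mod_add_left_eq mod_diff_left_eq mod_diff_right_eq)

lemma mod_plus_div_mult_of_dvd_diff:
  fixes a b q k :: int
  assumes "0 < q" "b \<in> {0..<k * q}" "q dvd a - b"
  shows "b = a mod q + (b div q) * q" "b div q \<in> {0..<k}"
proof -
  have "a mod q = b mod q"
    using assms(3) by (simp add: mod_eq_dvd_iff)
  then show "b = a mod q + (b div q) * q"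
    by simp
  have "q * (b div q) \<le> b"
    using assms(1) by (smt (verit) div_mult_mod_eq pos_mod_sign mult.commute)
  then have "q * (b div q) < q * k"
    using assms(2) by (simp add: mult.commute)
  then show "b div q \<in> {0..<k}"
    using assms(1,2) by (simp add: pos_imp_zdiv_nonneg_iff)
qed

lemma (in group) generate_eq_pow_lessThan:
  assumes "finite (carrier G)" "a \<in> carrier G" "a [^] (n::nat) = \<one>" "n > 0"
  shows "generate G {a} = (\<lambda>k. a [^] k) ` {..<n}"
proof -
  have pow_mod: "a [^] k = a [^] (k mod n)" for k :: nat
  proof -
    have "a [^] k = a [^] (n * (k div n) + k mod n)"
      by simp
    also have "\<dots> = (a [^] n) [^] (k div n) \<otimes> a [^] (k mod n)"
      using assms(2) by (simp add: nat_pow_mult nat_pow_pow)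
    finally show ?thesis
      using assms(2,3) by simp
  qed
  have "a [^] k \<in> (\<lambda>k. a [^] k) ` {..<n}" for k :: nat
    using assms(4) by (intro image_eqI[where f = "\<lambda>k. a [^] k", OF pow_mod]) simp
  then show ?thesis
    by (auto simp: generate_pow_on_finite_carrier[OF assms(1,2)])
qed

lemma (in group) generate_eq_if_pow:
  assumes "x \<in> carrier G" "y \<in> carrier G" "x = y [^] (k::nat)" "y = x [^] (l::nat)"
  shows "generate G {x} = generate G {y}"
proof -
  have pow_mem: "z [^] (n::nat) \<in> generate G {z}" if "z \<in> carrier G" for z n
  proof -
    have "z [^] int n \<in> generate G {z}"
      using generate_pow[OF that] by blast
    then show ?thesis
      by (simp add: int_pow_int)
  qed
  have "x \<in> generate G {y}"
    using pow_mem[OF assms(2), of k] by (simp add: assms(3))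
  moreover have "y \<in> generate G {x}"
    using pow_mem[OF assms(1), of l] by (simp add: assms(4))
  ultimately show ?thesis
    using assms(1,2) by (intro subset_antisym generate_subgroup_incl generate_is_subgroup) auto
qed

lemma pow_DirProd: "(g, h) [^]\<^bsub>G \<times>\<times> H\<^esub> (n::nat) = (g [^]\<^bsub>G\<^esub> n, h [^]\<^bsub>H\<^esub> n)"
  by (induction n) auto

lemma finite_cyclic_subgroups: "finite (carrier G) \<Longrightarrow> finite (cyclic_subgroups G)"
  by (simp add: cyclic_subgroups_def setcompr_eq_image)

definition permuting_cyclic_pairs :: "('a, 'b) monoid_scheme \<Rightarrow> ('a set \<times> 'a set) set" where
  "permuting_cyclic_pairs G = {(H, K). H \<in> cyclic_subgroups G \<and> K \<in> cyclic_subgroups G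
     \<and> H <#>\<^bsub>G\<^esub> K = K <#>\<^bsub>G\<^esub> H}"

lemma csd_eq: "csd G = real (card (permuting_cyclic_pairs G)) / real (card (cyclic_subgroups G))^2"
  by (simp add: csd_def permuting_cyclic_pairs_def)

lemma card_pairs_le:
  assumes "finite C" "finite R" "finite E" "C \<subseteq> R \<union> Y"
    and "\<And>H K. H \<in> Y \<Longrightarrow> K \<in> Y \<Longrightarrow> P H K \<Longrightarrow> (H, K) \<in> f ` E"
  shows "card {(H, K). H \<in> C \<and> K \<in> C \<and> P H K} \<le> 2 * card R * card C + card E"
proof -
  let ?S = "{(H, K). H \<in> C \<and> K \<in> C \<and> P H K}"
  have "?S \<subseteq> (R \<times> C \<union> C \<times> R) \<union> f ` E"
    using assms(4,5) by blast
  then have "card ?S \<le> card ((R \<times> C \<union> C \<times> R) \<union> f ` E)"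
    using assms(1-3) by (intro card_mono) auto
  also have "\<dots> \<le> card (R \<times> C \<union> C \<times> R) + card (f ` E)"
    by (rule card_Un_le)
  also have "\<dots> \<le> card (R \<times> C) + card (C \<times> R) + card E"
    by (intro add_mono card_Un_le card_image_le assms(3))
  finally show ?thesis
    by (simp add: card_cartesian_product algebra_simps)
qed

lemma divide_square_le:
  fixes S N L A B :: real
  assumes "S \<le> A * N + B" "0 < L" "L \<le> N" "0 \<le> A" "0 \<le> B"
  shows "S / N^2 \<le> A / L + B / L^2"
proof -
  have "S / N^2 \<le> (A * N + B) / N^2"
    using assms(1) by (simp add: divide_right_mono)
  also have "\<dots> = A / N + B / N^2"
    using assms(2,3) by (simp add: field_simps power2_eq_square)
  also have "\<dots> \<le> A / L + B / L^2"
    using assms(2-5) by (intro add_mono divide_left_mono power_mono mult_pos_pos) auto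
  finally show ?thesis .
qed

section \<open>The generalized quaternion group\<close>

(* quat_rot m k and quat_refl m k are x^k and x^k y in the encoding of quaternion_group. *)
definition quat_rot :: "nat \<Rightarrow> int \<Rightarrow> nat \<times> nat" where
  "quat_rot m k = (nat (k mod 2^m), 0)"

definition quat_refl :: "nat \<Rightarrow> int \<Rightarrow> nat \<times> nat" where
  "quat_refl m k = (nat (k mod 2^m), 1)"

lemma nat_mod_eqI: "int n = x mod 2^m \<Longrightarrow> n = nat (x mod 2^m)"
  by simp

lemma nat_mod_two_pow_less: "nat (x mod 2^m) < 2^m"
  by (simp add: nat_less_iff)

lemma int_two_pow_minus_nat_mod: "int (2^m - nat (x mod 2^m)) = 2^m - x mod 2^m"
  using less_imp_le[OF nat_mod_two_pow_less[of x m]] by (simp add: of_nat_diff)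

lemma quat_mult_rot_rot [simp]:
  "quat_mult m (quat_rot m a) (quat_rot m b) = quat_rot m (a + b)"
  unfolding quat_mult_def quat_rot_def
  by (simp, rule nat_mod_eqI) (simp add: zmod_int mod_add_eq)

lemma quat_mult_rot_refl [simp]:
  "quat_mult m (quat_rot m a) (quat_refl m b) = quat_refl m (a + b)"
  unfolding quat_mult_def quat_rot_def quat_refl_def
  by (simp, rule nat_mod_eqI) (simp add: zmod_int mod_add_eq)

lemma quat_mult_refl_rot [simp]:
  "quat_mult m (quat_refl m a) (quat_rot m b) = quat_refl m (a - b)"
proof -
  have "(nat (a mod 2^m) + (2^m - nat (b mod 2^m))) mod 2^m = nat ((a - b) mod 2^m)"
    by (intro nat_mod_eqI) (simp add: zmod_int int_two_pow_minus_nat_mod mod_add_modulus_minus_mod[where z=0, simplified])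
  then show ?thesis
    by (simp add: quat_mult_def quat_rot_def quat_refl_def)
qed

lemma quat_mult_refl_refl [simp]:
  "quat_mult m (quat_refl m a) (quat_refl m b) = quat_rot m (a - b + 2^(m-1))"
proof -
  have "(nat (a mod 2^m) + (2^m - nat (b mod 2^m)) + 2^(m-1)) mod 2^m = nat ((a - b + 2^(m-1)) mod 2^m)"
    by (intro nat_mod_eqI) (simp add: zmod_int int_two_pow_minus_nat_mod mod_add_modulus_minus_mod)
  then show ?thesis
    by (simp add: quat_mult_def quat_rot_def quat_refl_def)
qed

lemma quat_rot_eq_iff: "quat_rot m a = quat_rot m b \<longleftrightarrow> [a = b] (mod 2^m)"
  by (auto simp: quat_rot_def cong_def nat_eq_iff2)

lemma quat_refl_eq_iff: "quat_refl m a = quat_refl m b \<longleftrightarrow> [a = b] (mod 2^m)"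
  by (auto simp: quat_refl_def cong_def nat_eq_iff2)

lemma quat_rot_neq_refl [simp]: "quat_rot m a \<noteq> quat_refl m b" "quat_refl m b \<noteq> quat_rot m a"
  by (simp_all add: quat_rot_def quat_refl_def)

lemma quat_rot_zero: "quat_rot m 0 = (0, 0)"
  by (simp add: quat_rot_def)

lemma carrier_quaternion_group:
  "carrier (quaternion_group m) = range (quat_rot m) \<union> range (quat_refl m)"
proof -
  have "(i, a) \<in> range (quat_rot m) \<union> range (quat_refl m)" if "i < 2^m" "a < 2" for i a
  proof -
    have "i = nat (int i mod 2^m)"
      using that(1) by (simp flip: of_nat_power zmod_int)
    then show ?thesis
      using that(2) by (auto simp: quat_rot_def quat_refl_def less_2_cases_iff)
  qed
  then show ?thesis
    by (auto simp: quaternion_group_def) (auto simp: quat_rot_def quat_refl_def nat_mod_two_pow_less)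
qed

lemma two_pow_dvd_double_half: "(2::int)^m dvd 2 * 2^(m-1)"
  by (cases m) simp_all

lemma mult_quaternion_group [simp]: "x \<otimes>\<^bsub>quaternion_group m\<^esub> y = quat_mult m x y"
  by (simp add: quaternion_group_def)

lemma one_quaternion_group [simp]: "\<one>\<^bsub>quaternion_group m\<^esub> = quat_rot m 0"
  by (simp add: quaternion_group_def quat_rot_zero)

lemma group_quaternion_group: "group (quaternion_group m)"
proof (rule groupI)
  let ?Q = "quaternion_group m"
  show "x \<otimes>\<^bsub>?Q\<^esub> y \<in> carrier ?Q" if "x \<in> carrier ?Q" "y \<in> carrier ?Q" for x y
    using that by (auto simp: carrier_quaternion_group)
  show "\<one>\<^bsub>?Q\<^esub> \<in> carrier ?Q"
    by (simp add: carrier_quaternion_group)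
  show "x \<otimes>\<^bsub>?Q\<^esub> y \<otimes>\<^bsub>?Q\<^esub> z = x \<otimes>\<^bsub>?Q\<^esub> (y \<otimes>\<^bsub>?Q\<^esub> z)"
    if "x \<in> carrier ?Q" "y \<in> carrier ?Q" "z \<in> carrier ?Q" for x y z
    using that two_pow_dvd_double_half[of m]
    by (auto simp: carrier_quaternion_group quat_rot_eq_iff quat_refl_eq_iff
        cong_iff_dvd_diff algebra_simps)
  show "\<one>\<^bsub>?Q\<^esub> \<otimes>\<^bsub>?Q\<^esub> x = x" if "x \<in> carrier ?Q" for x
    using that by (auto simp: carrier_quaternion_group )
  show "\<exists>y\<in>carrier ?Q. y \<otimes>\<^bsub>?Q\<^esub> x = \<one>\<^bsub>?Q\<^esub>" if "x \<in> carrier ?Q" for x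
  proof -
    from that consider (rot) a where "x = quat_rot m a" | (refl) a where "x = quat_refl m a"
      by (auto simp: carrier_quaternion_group)
    then show ?thesis
    proof cases
      case rot
      then show ?thesis
        by (intro bexI[of _ "quat_rot m (- a)"]) (simp_all add:  carrier_quaternion_group)
    next
      case refl
      have "quat_mult m (quat_refl m (a + 2^(m-1))) (quat_refl m a) = quat_rot m 0"
        using two_pow_dvd_double_half[of m] by (simp add: quat_rot_eq_iff cong_iff_dvd_diff)
      then show ?thesis
        using refl by (intro bexI[of _ "quat_refl m (a + 2^(m-1))"])
          (simp_all add:  carrier_quaternion_group)
    qed
  qed
qed

section \<open>Cyclic subgroups of Z2 \<times> Q\<close>

abbreviation Z2Q :: "nat \<Rightarrow> (int \<times> nat \<times> nat) monoid" where
  "Z2Q m \<equiv> integer_mod_group 2 \<times>\<times> quaternion_group m"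

lemma group_Z2Q: "group (Z2Q m)"
  by (simp add: DirProd_group group_quaternion_group)

lemma carrier_integer_mod_group_two [simp]: "carrier (integer_mod_group 2) = {0, 1}"
  by (auto simp: carrier_integer_mod_group)

lemma finite_carrier_Z2Q: "finite (carrier (Z2Q m))"
  by (simp add: carrier_integer_mod_group quaternion_group_def)

lemma pow_Z2Q_rot: "(c, quat_rot m a) [^]\<^bsub>Z2Q m\<^esub> n = ((int n * c) mod 2, quat_rot m (int n * a))"
proof -
  have "quat_rot m a [^]\<^bsub>quaternion_group m\<^esub> n = quat_rot m (int n * a)"
    by (induction n) (simp_all add: distrib_right add.commute)
  then show ?thesis
    by (simp add: pow_DirProd)
qed

lemma generate_Z2Q_refl:
  assumes "c \<in> {0, 1}"
  shows "generate (Z2Q m) {(c, quat_refl m a)} =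
    {(0, quat_rot m 0), (c, quat_refl m a), (0, quat_rot m (2^(m-1))), (c, quat_refl m (a + 2^(m-1)))}"
proof -
  interpret group "Z2Q m" by (rule group_Z2Q)
  let ?g = "(c, quat_refl m a)" and ?h = "2^(m-1) :: int"
  have pows: "?g [^]\<^bsub>Z2Q m\<^esub> (1::nat) = ?g" "?g [^]\<^bsub>Z2Q m\<^esub> (2::nat) = (0, quat_rot m ?h)"
    "?g [^]\<^bsub>Z2Q m\<^esub> (3::nat) = (c, quat_refl m (a + ?h))" "?g [^]\<^bsub>Z2Q m\<^esub> (4::nat) = \<one>\<^bsub>Z2Q m\<^esub>"
    using assms two_pow_dvd_double_half[of m]
    by (auto simp: eval_nat_numeral quat_rot_eq_iff quat_refl_eq_iff cong_iff_dvd_diff)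
  have g: "?g \<in> carrier (Z2Q m)"
    using assms by (auto simp: carrier_quaternion_group)
  have "generate (Z2Q m) {?g} = (\<lambda>k. ?g [^]\<^bsub>Z2Q m\<^esub> k) ` {0, 1, 2, 3::nat}"
  proof -
    have "{..<4::nat} = {0, 1, 2, 3}"
      by auto
    then show ?thesis
      using generate_eq_pow_lessThan[OF finite_carrier_Z2Q g pows(4)] by simp
  qed
  also have "\<dots> = {(0, quat_rot m 0), (c, quat_refl m a), (0, quat_rot m ?h), (c, quat_refl m (a + ?h))}"
    by (simp only: image_insert image_empty pows(1-3) nat_pow_0 one_DirProd one_integer_mod_group one_quaternion_group)
  finally show ?thesis .
qed

lemma odd_mult_mod_two: "odd n \<Longrightarrow> c \<in> {0, 1} \<Longrightarrow> (int n * c) mod 2 = c"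
  by (auto elim!: oddE)

lemma odd_inverse_mod_two_pow:
  assumes "odd u" "m \<ge> 1"
  obtains w where "odd w" "[int u * int w = 1] (mod 2^m)"
proof -
  have "coprime u (2^m)"
    using assms(1) by simp
  then obtain w where w: "[u * w = 1] (mod 2^m)"
    by (metis One_nat_def cong_solve_coprime_nat)
  have "odd w"
    using cong_dvd_modulus_nat[OF w, of 2] assms(2) by (auto simp: cong_def dvd_power)
  moreover have "[int u * int w = 1] (mod 2^m)"
    using w by (metis cong_int_iff of_nat_1 of_nat_mult of_nat_numeral of_nat_power)
  ultimately show ?thesis
    using that by blast
qed

lemma generate_Z2Q_rot_odd_mult:
  assumes "m \<ge> 1" "c \<in> {0, 1}" "odd u"
  shows "generate (Z2Q m) {(c, quat_rot m (int u * b))} = generate (Z2Q m) {(c, quat_rot m b)}"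
proof -
  obtain w where "odd w" and w: "[int u * int w = 1] (mod 2^m)"
    using odd_inverse_mod_two_pow[OF assms(3,1)] .
  let ?x = "(c, quat_rot m (int u * b))" and ?y = "(c, quat_rot m b)"
  have x: "?x = ?y [^]\<^bsub>Z2Q m\<^esub> u"
    by (simp add: pow_Z2Q_rot odd_mult_mod_two[OF assms(3,2)])
  have "[int w * (int u * b) = 1 * b] (mod 2^m)"
    using cong_scalar_right[OF w, of b] by (simp add: algebra_simps)
  then have y: "?y = ?x [^]\<^bsub>Z2Q m\<^esub> w"
    by (simp add: pow_Z2Q_rot odd_mult_mod_two[OF \<open>odd w\<close> assms(2)] quat_rot_eq_iff cong_sym)
  have "?x \<in> carrier (Z2Q m)" "?y \<in> carrier (Z2Q m)"
    using assms(2) by (auto simp: carrier_quaternion_group)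
  then show ?thesis
    using group.generate_eq_if_pow[OF group_Z2Q _ _ x y] by blast
qed

lemma generate_Z2Q_rot:
  assumes "m \<ge> 1" "c \<in> {0, 1}"
  obtains v where "v \<le> m"
    "generate (Z2Q m) {(c, quat_rot m a)} = generate (Z2Q m) {(c, quat_rot m (2^v))}"
proof (cases "[a = 0] (mod 2^m)")
  case True
  then have "quat_rot m a = quat_rot m (2^m)"
    by (simp add: quat_rot_eq_iff cong_def)
  then show ?thesis
    using that[of m] by simp
next
  case False
  define i where "i = nat (a mod 2^m)"
  have "i \<noteq> 0" "i < 2^m"
    using False by (auto simp: i_def cong_def nat_mod_two_pow_less)
  define v where "v = multiplicity 2 i"
  obtain u where u: "i = 2^v * u" "odd u"
    using multiplicity_decompose'[of i 2] \<open>i \<noteq> 0\<close> unfolding v_def by auto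
  have "(2::nat)^v \<le> i"
    using u odd_pos[OF u(2)] by simp
  then have "(2::nat)^v < 2^m"
    using \<open>i < 2^m\<close> by linarith
  then have "v \<le> m"
    by simp
  moreover have "quat_rot m a = quat_rot m (int u * 2^v)"
  proof -
    have "quat_rot m a = quat_rot m (int i)"
      by (simp add: i_def quat_rot_eq_iff cong_def)
    moreover have "int i = int u * 2^v"
      using u(1) by simp
    ultimately show ?thesis
      by simp
  qed
  ultimately show ?thesis
    using that generate_Z2Q_rot_odd_mult[OF assms u(2)] by simp
qed

lemma snd_mem_generate_Z2Q_refl:
  assumes "c \<in> {0, 1}" "p \<in> generate (Z2Q m) {(c, quat_refl m a)}"
  obtains e where "(2::int)^m dvd 2 * e" "snd p = quat_rot m e \<or> snd p = quat_refl m (a + e)"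
proof -
  have "snd p \<in> {quat_rot m 0, quat_refl m (a + 0), quat_rot m (2^(m-1)), quat_refl m (a + 2^(m-1))}"
    using assms by (auto simp: generate_Z2Q_refl)
  then show ?thesis
    using that[of 0] that[of "2^(m-1)"] two_pow_dvd_double_half[of m] by auto
qed

(* The two disjuncts are the factorisations of x^(b - a + h) as rotation times rotation and as
   reflection times reflection; e, f, h stand for exponents of order at most 2. *)
lemma dvd_four_times_diff:
  fixes M a b e f h :: int
  assumes "M dvd (b - a + h) - (e + f) \<or> M dvd (b - a + h) - (a + e - (b + f) + h)"
    and "M dvd 2 * e" "M dvd 2 * f" "M dvd 2 * h"
  shows "M dvd 4 * (a - b)"
  using assms(1)
proof
  assume "M dvd (b - a + h) - (e + f)"
  moreover have "4 * (a - b) = 2 * (2 * h) - 4 * ((b - a + h) - (e + f)) - 2 * (2 * e) - 2 * (2 * f)"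
    by (simp add: algebra_simps)
  ultimately show ?thesis
    using assms(2-4) by (metis dvd_diff dvd_mult)
next
  assume "M dvd (b - a + h) - (a + e - (b + f) + h)"
  moreover have "4 * (a - b) = - (2 * ((b - a + h) - (a + e - (b + f) + h))) - 2 * e + 2 * f"
    by (simp add: algebra_simps)
  ultimately show ?thesis
    using assms(2,3) by (metis dvd_add dvd_diff dvd_minus_iff dvd_mult)
qed

lemma permutable_generate_Z2Q_refl:
  assumes "c \<in> {0, 1}" "d \<in> {0, 1}"
    and "generate (Z2Q m) {(c, quat_refl m a)} <#>\<^bsub>Z2Q m\<^esub> generate (Z2Q m) {(d, quat_refl m b)} =
         generate (Z2Q m) {(d, quat_refl m b)} <#>\<^bsub>Z2Q m\<^esub> generate (Z2Q m) {(c, quat_refl m a)}"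
      (is "?H <#>\<^bsub>Z2Q m\<^esub> ?K = ?K <#>\<^bsub>Z2Q m\<^esub> ?H")
  shows "(2::int)^m dvd 4 * (a - b)"
proof -
  let ?M = "(2::int)^m" and ?h = "(2::int)^(m-1)"
  have "(d, quat_refl m b) \<otimes>\<^bsub>Z2Q m\<^esub> (c, quat_refl m a) \<in> ?K <#>\<^bsub>Z2Q m\<^esub> ?H"
    unfolding set_mult_def by (blast intro: generate.incl)
  then have "(d, quat_refl m b) \<otimes>\<^bsub>Z2Q m\<^esub> (c, quat_refl m a) \<in> ?H <#>\<^bsub>Z2Q m\<^esub> ?K"
    by (simp only: assms(3))
  then obtain p q where pq: "p \<in> ?H" "q \<in> ?K"
    "(d, quat_refl m b) \<otimes>\<^bsub>Z2Q m\<^esub> (c, quat_refl m a) = p \<otimes>\<^bsub>Z2Q m\<^esub> q"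
    unfolding set_mult_def by blast
  obtain e where e: "?M dvd 2 * e" "snd p = quat_rot m e \<or> snd p = quat_refl m (a + e)"
    using snd_mem_generate_Z2Q_refl[OF assms(1) pq(1)] by blast
  obtain f where f: "?M dvd 2 * f" "snd q = quat_rot m f \<or> snd q = quat_refl m (b + f)"
    using snd_mem_generate_Z2Q_refl[OF assms(2) pq(2)] by blast
  have "quat_rot m (b - a + ?h) = quat_mult m (snd p) (snd q)"
    using arg_cong[OF pq(3), of snd] by (simp add: mult_DirProd')
  then have "?M dvd (b - a + ?h) - (e + f) \<or> ?M dvd (b - a + ?h) - (a + e - (b + f) + ?h)"
    using e(2) f(2) by (auto simp: quat_rot_eq_iff cong_iff_dvd_diff)
  then show ?thesis
    using e(1) f(1) two_pow_dvd_double_half[of m] by (rule dvd_four_times_diff)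
qed

section \<open>Counting\<close>

definition Z2Q_rot_subgroups :: "nat \<Rightarrow> (int \<times> nat \<times> nat) set set" where
  "Z2Q_rot_subgroups m = (\<lambda>(c, v). generate (Z2Q m) {(c, quat_rot m (2^v))}) ` ({0, 1} \<times> {..m})"

definition Z2Q_refl_subgroups :: "nat \<Rightarrow> (int \<times> nat \<times> nat) set set" where
  "Z2Q_refl_subgroups m = (\<lambda>(c, a). generate (Z2Q m) {(c, quat_refl m a)}) ` ({0, 1} \<times> {0..<2^m})"

lemma cyclic_subgroups_Z2Q_subset:
  assumes "m \<ge> 1"
  shows "cyclic_subgroups (Z2Q m) \<subseteq> Z2Q_rot_subgroups m \<union> Z2Q_refl_subgroups m"
proof
  fix H assume "H \<in> cyclic_subgroups (Z2Q m)"
  then obtain g where g: "g \<in> carrier (Z2Q m)" "H = generate (Z2Q m) {g}"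
    unfolding cyclic_subgroups_def by blast
  obtain c x where "g = (c, x)"
    by (rule prod.exhaust)
  with g have H: "H = generate (Z2Q m) {(c, x)}" and c: "c \<in> {0, 1}"
    and x: "x \<in> range (quat_rot m) \<union> range (quat_refl m)"
    by (simp_all add: carrier_quaternion_group)
  from x show "H \<in> Z2Q_rot_subgroups m \<union> Z2Q_refl_subgroups m"
  proof
    assume "x \<in> range (quat_rot m)"
    then obtain a where "x = quat_rot m a"
      by blast
    moreover obtain v where "v \<le> m"
      "generate (Z2Q m) {(c, quat_rot m a)} = generate (Z2Q m) {(c, quat_rot m (2^v))}"
      by (rule generate_Z2Q_rot[OF assms c])
    ultimately show ?thesis
      using c H unfolding Z2Q_rot_subgroups_def by (intro UnI1 image_eqI[of _ _ "(c, v)"]) auto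
  next
    assume "x \<in> range (quat_refl m)"
    then obtain a where "x = quat_refl m a"
      by blast
    then have "x = quat_refl m (a mod 2^m)"
      by (simp add: quat_refl_eq_iff)
    then show ?thesis
      using c H unfolding Z2Q_refl_subgroups_def by (intro UnI2 image_eqI[of _ _ "(c, a mod 2^m)"]) auto
  qed
qed

lemma card_Z2Q_rot_subgroups: "card (Z2Q_rot_subgroups m) \<le> 2 * (m + 1)"
proof -
  have "card (Z2Q_rot_subgroups m) \<le> card ({0, 1 :: int} \<times> {..m})"
    unfolding Z2Q_rot_subgroups_def by (rule card_image_le) simp
  then show ?thesis
    by (simp add: card_cartesian_product)
qed

lemma card_cyclic_subgroups_Z2Q_ge:
  assumes "m \<ge> 1"
  shows "2^(m-1) \<le> card (cyclic_subgroups (Z2Q m))"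
proof -
  let ?h = "(2::int)^(m-1)" and ?f = "\<lambda>a. generate (Z2Q m) {(0, quat_refl m a)}"
  have M: "(2::int)^m = 2 * ?h"
    using assms by (simp flip: power_Suc)
  have "inj_on ?f {0..<?h}"
  proof (rule inj_onI)
    fix a b assume ab: "a \<in> {0..<?h}" "b \<in> {0..<?h}" and "?f a = ?f b"
    then have "(0, quat_refl m b) \<in> ?f a"
      by (auto intro: generate.incl)
    then have "[b = a] (mod 2^m) \<or> [b = a + ?h] (mod 2^m)"
      by (auto simp: generate_Z2Q_refl quat_refl_eq_iff)
    then show "a = b"
      using ab by (auto simp: cong_def M)
  qed
  moreover have "?f a \<in> cyclic_subgroups (Z2Q m)" for a
    unfolding cyclic_subgroups_def
    by (intro CollectI exI[of _ "(0, quat_refl m a)"]) (simp add: carrier_quaternion_group)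
  then have "card (?f ` {0..<?h}) \<le> card (cyclic_subgroups (Z2Q m))"
    by (intro card_mono finite_cyclic_subgroups finite_carrier_Z2Q) blast
  ultimately show ?thesis
    by (simp add: card_image nat_power_eq)
qed

definition Z2Q_refl_index_pairs :: "nat \<Rightarrow> ((int \<times> int) \<times> (int \<times> int)) set" where
  "Z2Q_refl_index_pairs m = {((c, a), (d, b)). c \<in> {0, 1} \<and> d \<in> {0, 1} \<and>
     a \<in> {0..<2^m} \<and> b \<in> {0..<2^m} \<and> (2::int)^m dvd 4 * (a - b)}"

lemma card_Z2Q_refl_index_pairs:
  assumes "m \<ge> 2"
  shows "card (Z2Q_refl_index_pairs m) \<le> 16 * 2^m"
proof -
  define q :: int where "q = 2^(m-2)"
  have M: "(2::int)^m = 4 * q"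
  proof -
    have "(2::int)^m = 2^(m - 2 + 2)"
      by (simp only: le_add_diff_inverse2[OF assms])
    then show ?thesis
      unfolding q_def power_add by simp
  qed
  define F where "F = (\<lambda>(c :: int, d :: int, a :: int, t :: int). ((c, a), (d, a mod q + t * q)))"
  have "Z2Q_refl_index_pairs m \<subseteq> F ` ({0, 1} \<times> {0, 1} \<times> {0..<2^m} \<times> {0..<4})"
  proof
    fix x assume "x \<in> Z2Q_refl_index_pairs m"
    then obtain c d a b where x: "x = ((c, a), (d, b))" "c \<in> {0, 1}" "d \<in> {0, 1}"
      "a \<in> {0..<4 * q}" "b \<in> {0..<4 * q}" "4 * q dvd 4 * (a - b)"
      unfolding Z2Q_refl_index_pairs_def M by blast
    have "q dvd a - b"
      using x(6) dvd_mult_cancel_left[of 4 q "a - b"] by simp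
    then have "b = a mod q + (b div q) * q" "b div q \<in> {0..<4}"
      using mod_plus_div_mult_of_dvd_diff[of q b 4 a] x(5) by (simp_all add: q_def)
    then show "x \<in> F ` ({0, 1} \<times> {0, 1} \<times> {0..<2^m} \<times> {0..<4})"
      using x(1-4) unfolding M by (intro image_eqI[of _ F "(c, d, a, b div q)"]) (simp_all add: F_def)
  qed
  then have "card (Z2Q_refl_index_pairs m) \<le> card (F ` ({0, 1} \<times> {0, 1} \<times> {0..<2^m} \<times> {0..<4}))"
    by (rule card_mono[rotated]) simp
  also have "\<dots> \<le> card ({0, 1 :: int} \<times> {0, 1 :: int} \<times> {0..<(2::int)^m} \<times> {0..<4 :: int})"
    by (rule card_image_le) simp
  finally show ?thesis
    by (simp add: card_cartesian_product nat_power_eq)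
qed

lemma card_permuting_cyclic_pairs_Z2Q:
  assumes "m \<ge> 2"
  shows "card (permuting_cyclic_pairs (Z2Q m)) \<le>
    4 * (m + 1) * card (cyclic_subgroups (Z2Q m)) + 16 * 2^m"
proof -
  let ?f = "\<lambda>((c, a), (d, b)). (generate (Z2Q m) {(c, quat_refl m a)}, generate (Z2Q m) {(d, quat_refl m b)})"
  have "finite (Z2Q_refl_index_pairs m)"
    by (rule finite_subset[of _ "({0, 1} \<times> {0..<2^m}) \<times> ({0, 1} \<times> {0..<2^m})"])
      (auto simp: Z2Q_refl_index_pairs_def)
  moreover have "(H, K) \<in> ?f ` Z2Q_refl_index_pairs m"
    if HK: "H \<in> Z2Q_refl_subgroups m" "K \<in> Z2Q_refl_subgroups m"
      and perm: "H <#>\<^bsub>Z2Q m\<^esub> K = K <#>\<^bsub>Z2Q m\<^esub> H" for H K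
  proof -
    obtain c a where c: "c \<in> {0, 1}" "a \<in> {0..<2^m}" and H: "H = generate (Z2Q m) {(c, quat_refl m a)}"
      using HK(1) unfolding Z2Q_refl_subgroups_def by blast
    obtain d b where d: "d \<in> {0, 1}" "b \<in> {0..<2^m}" and K: "K = generate (Z2Q m) {(d, quat_refl m b)}"
      using HK(2) unfolding Z2Q_refl_subgroups_def by blast
    have "(2::int)^m dvd 4 * (a - b)"
      using permutable_generate_Z2Q_refl[OF c(1) d(1)] perm unfolding H K .
    then show ?thesis
      using c d unfolding H K Z2Q_refl_index_pairs_def by (intro image_eqI[of _ _ "((c, a), (d, b))"]) auto
  qed
  ultimately have "card (permuting_cyclic_pairs (Z2Q m)) \<le>
      2 * card (Z2Q_rot_subgroups m) * card (cyclic_subgroups (Z2Q m)) + card (Z2Q_refl_index_pairs m)"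
    unfolding permuting_cyclic_pairs_def using assms
    by (intro card_pairs_le[where Y = "Z2Q_refl_subgroups m" and f = ?f]
        finite_cyclic_subgroups finite_carrier_Z2Q cyclic_subgroups_Z2Q_subset)
      (auto simp: Z2Q_rot_subgroups_def)
  also have "\<dots> \<le> 2 * (2 * (m + 1)) * card (cyclic_subgroups (Z2Q m)) + 16 * 2^m"
    using card_Z2Q_rot_subgroups card_Z2Q_refl_index_pairs[OF assms]
    by (intro add_mono mult_right_mono mult_left_mono) auto
  finally show ?thesis
    by (simp add: algebra_simps)
qed

lemma csd_Z2Q_le:
  assumes "m \<ge> 2"
  shows "csd (Z2Q m) \<le> (8 * real m + 72) / 2^m"
proof -
  let ?N = "real (card (cyclic_subgroups (Z2Q m)))" and ?L = "(2::real)^m / 2"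
  have "real (card (permuting_cyclic_pairs (Z2Q m))) \<le> 4 * (real m + 1) * ?N + 16 * 2^m"
    using of_nat_mono[OF card_permuting_cyclic_pairs_Z2Q[OF assms], where 'a = real] by (simp add: algebra_simps)
  moreover have "?L \<le> ?N"
  proof -
    have "?L = 2^(m-1)"
      using assms by (simp add: power_diff)
    then show ?thesis
      using of_nat_mono[OF card_cyclic_subgroups_Z2Q_ge, of m, where 'a = real] assms by simp
  qed
  ultimately have "csd (Z2Q m) \<le> 4 * (real m + 1) / ?L + 16 * 2^m / ?L^2"
    unfolding csd_eq by (intro divide_square_le) auto
  also have "\<dots> = (8 * real m + 72) / 2^m"
    by (simp add: field_simps power2_eq_square)
  finally show ?thesis .
qed

theorem corollary3p5:
  shows "(\<lambda>m. csd (integer_mod_group 2 \<times>\<times> quaternion_group m)) \<longlonglongrightarrow> 0"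
proof (rule tendsto_sandwich[OF _ _ tendsto_const])
  show "\<forall>\<^sub>F m in sequentially. 0 \<le> csd (integer_mod_group 2 \<times>\<times> quaternion_group m)"
    by (simp add: csd_def)
  show "\<forall>\<^sub>F m in sequentially. csd (integer_mod_group 2 \<times>\<times> quaternion_group m) \<le> (8 * real m + 72) / 2^m"
    using eventually_ge_at_top[of 2] by eventually_elim (rule csd_Z2Q_le)
  show "(\<lambda>m. (8 * real m + 72) / 2^m) \<longlonglongrightarrow> 0"
    by real_asymp
qed

end
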